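(* Assume $\tau<1$. For every measurable $f:\mathcal X\to\mathbb R^d$ with bounded norm, $$\mathcal L^{\mu}_{sup}(f)\le\frac{1}{1-\tau}\big(\mathcal L_{nce}(f)-\tau\big).$$
   Context: $\mathcal X$ is a feature space. $\mathcal C$ is a set of latent classes with distribution $\rho$, and $\mathcal D_c$ is a distribution on $\mathcal X$ for each $c\in\mathcal C$. $\sigma(z)=1/(1+e^{-z})$ and $\log$ is natural. $(x,x^+)\sim\mathcal D_{sim}$ means $c\sim\rho$, then $x,x^+$ i.i.d. $\sim\mathcal D_c$. $x^-\sim\mathcal D_{neg}$ means $c'\sim\rho$, then $x^-\sim\mathcal D_{c'}$, independently. The NCE loss is $$\mathcal L_{nce}(f)=-\mathbb E\big[\log\sigma(f(x)^Tf(x^+))+\log\sigma(-f(x)^Tf(x^-))\big]$$ under these draws. $\tau=\Pr_{c,c'\sim\rho\text{ i.i.d.}}[c=c']$. The class means are $\mu_c=\mathbb E_{x\sim\mathcal D_c}[f(x)]$. The supervised loss is $$\mathcal L^{\mu}_{sup}(f)=\mathbb E_{(c,c')\sim\rho\otimes\rho\mid c\ne c'}\,\mathbb E_{x\sim\mathcal D_c}\big[-\log\sigma(f(x)^T\mu_c)-\log\sigma(-f(x)^T\mu_{c'})\big].$$ *)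

theory Defs
  imports "HOL-Probability.Probability"
begin

definition sigmoid :: "real \<Rightarrow> real" where
  "sigmoid z = 1 / (1 + exp (- z))"

definition coll_prob :: "'c pmf \<Rightarrow> real" where
  "coll_prob \<rho> = measure_pmf.prob (pair_pmf \<rho> \<rho>) {(c, c'). c = c'}"

definition class_mean :: "('c \<Rightarrow> 'x measure) \<Rightarrow> ('x \<Rightarrow> real^'d) \<Rightarrow> 'c \<Rightarrow> real^'d" where
  "class_mean D f c = (\<integral>x. f x \<partial>(D c))"

definition L_nce :: "'c pmf \<Rightarrow> ('c \<Rightarrow> 'x measure) \<Rightarrow> ('x \<Rightarrow> real^'d) \<Rightarrow> real" where
  "L_nce \<rho> D f =
     - (\<integral>c. \<integral>c'. \<integral>x. \<integral>xp. \<integral>xn.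
          ln (sigmoid (f x \<bullet> f xp)) + ln (sigmoid (- (f x \<bullet> f xn)))
        \<partial>(D c') \<partial>(D c) \<partial>(D c) \<partial>(measure_pmf \<rho>) \<partial>(measure_pmf \<rho>))"

definition L_sup_mu :: "'c pmf \<Rightarrow> ('c \<Rightarrow> 'x measure) \<Rightarrow> ('x \<Rightarrow> real^'d) \<Rightarrow> real" where
  "L_sup_mu \<rho> D f =
     (\<integral>cc. \<integral>x. - ln (sigmoid (f x \<bullet> class_mean D f (fst cc)))
                 - ln (sigmoid (- (f x \<bullet> class_mean D f (snd cc))))
        \<partial>(D (fst cc)) \<partial>(measure_pmf (cond_pmf (pair_pmf \<rho> \<rho>) {(c, c'). c \<noteq> c'})))"

end

(*
  Write l(z) = -ln sigma(z) = ln (1 + e^(-z)); l is convex.  Fix classes c, c' and an anchor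
  x ~ D_c.  Since the class means are the expectations of f, Jensen's inequality in x+ ~ D_c and
  x- ~ D_c' bounds the mean-classifier loss of x by its NCE loss, so the supervised pair loss is
  at most the NCE pair loss.  Averaging over c, c' ~ rho, the pairs with c \<noteq> c' carry
  (1 - tau) L_sup, and the diagonal pairs carry at least tau because
  l(z) + l(-z) = ln (2 + e^z + e^(-z)) \<ge> ln 4 \<ge> 1.
*)

theory Submission
  imports Defs
begin

definition logistic_loss :: "real \<Rightarrow> real" where
  "logistic_loss z = ln (1 + exp (- z))"

lemma ln_sigmoid: "ln (sigmoid z) = - logistic_loss z"
  unfolding sigmoid_def logistic_loss_def by (simp add: ln_div add_pos_pos)

lemma logistic_loss_nonneg: "0 \<le> logistic_loss z"
  unfolding logistic_loss_def by simp

lemma logistic_loss_le: "logistic_loss z \<le> 1 + \<bar>z\<bar>"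
proof -
  have "1 + exp (- z) \<le> 2 * exp \<bar>z\<bar>"
    using one_le_exp_iff[of "\<bar>z\<bar>"] exp_le_cancel_iff[of "- z" "\<bar>z\<bar>"] by linarith
  then have "logistic_loss z \<le> ln (2 * exp \<bar>z\<bar>)"
    unfolding logistic_loss_def by (simp add: add_pos_pos)
  also have "\<dots> = ln 2 + \<bar>z\<bar>"
    by (simp add: ln_mult)
  also have "\<dots> \<le> 1 + \<bar>z\<bar>"
    using ln_le_minus_one[of 2] by simp
  finally show ?thesis .
qed

lemma logistic_loss_add_reflect_ge_one: "1 \<le> logistic_loss z + logistic_loss (- z)"
proof -
  have "logistic_loss z + logistic_loss (- z) = ln ((1 + exp (- z)) * (1 + exp z))"
    unfolding logistic_loss_def
    by (simp add: ln_mult_pos add_pos_pos)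
  also have "(1 + exp (- z)) * (1 + exp z) = 2 + (exp z + exp (- z))"
    by (simp add: algebra_simps exp_minus)
  also have "ln (2 + (exp z + exp (- z))) \<ge> ln 4"
  proof -
    have "2 \<le> exp z + exp (- z)"
      using sum_squares_bound[of "exp (z / 2)" "exp (- z / 2)"]
      by (simp add: power2_eq_square mult.assoc exp_add[symmetric])
    then show ?thesis by simp
  qed
  moreover have "1 \<le> ln (4::real)"
    using exp_le by (subst ln_ge_iff) auto
  ultimately show ?thesis by linarith
qed

lemma logistic_loss_has_real_derivative:
  "(logistic_loss has_real_derivative - 1 / (1 + exp z)) (at z)"
  unfolding logistic_loss_def
  by (rule derivative_eq_intros refl | simp add: add_pos_pos)+
     (simp add: exp_minus field_simps)

lemma convex_on_logistic_loss: "convex_on UNIV logistic_loss"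
  by (rule convex_on_realI[OF _ logistic_loss_has_real_derivative]) (auto simp: frac_le add_pos_pos)

lemma borel_measurable_logistic_loss [measurable]: "logistic_loss \<in> borel_measurable borel"
  unfolding logistic_loss_def by measurable

lemma integral_cond_pmf:
  fixes g :: "'a \<Rightarrow> real"
  assumes "set_pmf p \<inter> S \<noteq> {}"
  shows "measure_pmf.prob p S * measure_pmf.expectation (cond_pmf p S) g
           = measure_pmf.expectation p (\<lambda>x. indicator S x * g x)"
proof -
  have S_pos: "measure_pmf.prob p S \<noteq> 0"
    using assms measure_pmf_zero_iff[of p S] by simp
  have "measure_pmf.expectation (cond_pmf p S) g
          = (\<integral>x. pmf (cond_pmf p S) x * g x \<partial>count_space UNIV)"
    by (simp add: measure_pmf_eq_density integral_density)
  also have "\<dots> = (\<integral>x. pmf p x * (indicator S x * g x) / measure_pmf.prob p S \<partial>count_space UNIV)"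
    by (intro Bochner_Integration.integral_cong) (auto simp: pmf_cond[OF assms])
  also have "\<dots> = (\<integral>x. pmf p x * (indicator S x * g x) \<partial>count_space UNIV) / measure_pmf.prob p S"
    by (rule integral_divide_zero)
  also have "\<dots> = measure_pmf.expectation p (\<lambda>x. indicator S x * g x) / measure_pmf.prob p S"
    by (simp add: measure_pmf_eq_density integral_density)
  finally show ?thesis
    using S_pos by simp
qed

lemma integrable_measure_pmf_bounded:
  fixes h :: "'a \<Rightarrow> real"
  assumes "\<And>z. 0 \<le> h z \<and> h z \<le> C"
  shows "integrable (measure_pmf p) h"
  using assms by (intro measure_pmf.integrable_const_bound[where B=C] AE_I2) auto

lemma integral_measure_pmf_bounds:
  fixes h :: "'a \<Rightarrow> real"
  assumes "\<And>z. 0 \<le> h z \<and> h z \<le> C"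
  shows "0 \<le> measure_pmf.expectation p h \<and> measure_pmf.expectation p h \<le> C"
  using assms integrable_measure_pmf_bounded[OF assms]
  by (auto intro!: measure_pmf.integral_le_const integral_nonneg_AE)

lemma integral_pair_pmf:
  fixes g :: "'a \<times> 'b \<Rightarrow> real"
  assumes g: "\<And>z. 0 \<le> g z \<and> g z \<le> K"
  shows "measure_pmf.expectation (pair_pmf A B) g = (\<integral>a. \<integral>b. g (a, b) \<partial>B \<partial>A)"
proof -
  have inner: "0 \<le> (\<integral>b. g (a, b) \<partial>B) \<and> (\<integral>b. g (a, b) \<partial>B) \<le> K" for a
    using g by (rule integral_measure_pmf_bounds)
  have "ennreal (measure_pmf.expectation (pair_pmf A B) g) = (\<integral>\<^sup>+z. g z \<partial>pair_pmf A B)"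
    using g by (intro nn_integral_eq_integral[symmetric] integrable_measure_pmf_bounded AE_I2) auto
  also have "\<dots> = (\<integral>\<^sup>+a. \<integral>\<^sup>+b. g (a, b) \<partial>B \<partial>A)"
    by (rule nn_integral_pair_pmf')
  also have "\<dots> = (\<integral>\<^sup>+a. ennreal (\<integral>b. g (a, b) \<partial>B) \<partial>A)"
    using g by (intro nn_integral_cong nn_integral_eq_integral integrable_measure_pmf_bounded AE_I2) auto
  also have "\<dots> = ennreal (\<integral>a. \<integral>b. g (a, b) \<partial>B \<partial>A)"
    using inner by (intro nn_integral_eq_integral integrable_measure_pmf_bounded AE_I2) auto
  finally show ?thesis
    using g inner by (simp add: integral_nonneg_AE)
qed

lemma cond_off_diagonal_expectation_bound:
  fixes g :: "'c \<Rightarrow> 'c \<Rightarrow> real"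
  assumes tau: "coll_prob \<rho> < 1"
    and g: "\<And>c c'. 0 \<le> g c c' \<and> g c c' \<le> K" and g_diag: "\<And>c. 1 \<le> g c c"
  shows "(1 - coll_prob \<rho>)
             * (\<integral>cc. g (fst cc) (snd cc) \<partial>cond_pmf (pair_pmf \<rho> \<rho>) {(c, c'). c \<noteq> c'})
           + coll_prob \<rho> \<le> (\<integral>c. \<integral>c'. g c c' \<partial>\<rho> \<partial>\<rho>)"
proof -
  define P where "P = pair_pmf \<rho> \<rho>"
  define Off where "Off = {(c::'c, c'). c \<noteq> c'}"
  define Diag where "Diag = {(c::'c, c'). c = c'}"
  let ?g = "\<lambda>cc. g (fst cc) (snd cc)"
  have "0 \<le> K"
    using g[of undefined undefined] by linarith
  have integrable: "integrable (measure_pmf P) (\<lambda>cc. indicator A cc * ?g cc)" for A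
    using g \<open>0 \<le> K\<close>
    by (intro measure_pmf.integrable_const_bound[where B=K] AE_I2) (auto simp: indicator_def)
  have tau_eq: "coll_prob \<rho> = measure_pmf.prob P Diag"
    unfolding coll_prob_def P_def Diag_def ..
  have Off_eq: "Off = space (measure_pmf P) - Diag"
    unfolding Off_def Diag_def by auto
  have Off_prob: "measure_pmf.prob P Off = 1 - coll_prob \<rho>"
    unfolding tau_eq Off_eq by (rule measure_pmf.prob_compl) simp
  then have "set_pmf P \<inter> Off \<noteq> {}"
    using tau measure_pmf_zero_iff[of P Off] by auto
  then have "(1 - coll_prob \<rho>) * (\<integral>cc. ?g cc \<partial>cond_pmf P Off)
               = (\<integral>cc. indicator Off cc * ?g cc \<partial>P)"
    using integral_cond_pmf Off_prob by metis
  moreover have "coll_prob \<rho> \<le> (\<integral>cc. indicator Diag cc * ?g cc \<partial>P)"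
  proof -
    have integrable_Diag: "integrable (measure_pmf P) (indicator Diag :: _ \<Rightarrow> real)"
      by (intro measure_pmf.integrable_const_bound[where B=1] AE_I2) (auto simp: indicator_def)
    have "coll_prob \<rho> = (\<integral>cc. indicator Diag cc \<partial>P)"
      unfolding tau_eq by simp
    also have "\<dots> \<le> (\<integral>cc. indicator Diag cc * ?g cc \<partial>P)"
      using g_diag
      by (intro integral_mono integrable_Diag integrable) (auto simp: Diag_def indicator_def)
    finally show ?thesis .
  qed
  moreover have "(\<integral>cc. indicator Off cc * ?g cc \<partial>P) + (\<integral>cc. indicator Diag cc * ?g cc \<partial>P)
                   = (\<integral>cc. ?g cc \<partial>P)"
  proof -
    have "(\<lambda>cc. indicator Off cc * ?g cc + indicator Diag cc * ?g cc) = ?g"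
      by (auto simp: Off_def Diag_def indicator_def)
    then show ?thesis
      using Bochner_Integration.integral_add[OF integrable[of Off] integrable[of Diag]] by simp
  qed
  moreover have "(\<integral>cc. ?g cc \<partial>P) = (\<integral>c. \<integral>c'. g c c' \<partial>\<rho> \<partial>\<rho>)"
    unfolding P_def using g by (subst integral_pair_pmf) auto
  ultimately show ?thesis
    unfolding P_def Off_def by linarith
qed

lemma (in prob_space) logistic_loss_inner_expectation_le:
  fixes X :: "'a \<Rightarrow> 'b::euclidean_space"
  assumes "integrable M X" and "integrable M (\<lambda>x. logistic_loss (v \<bullet> X x))"
  shows "logistic_loss (v \<bullet> expectation X) \<le> expectation (\<lambda>x. logistic_loss (v \<bullet> X x))"
proof -
  have "v \<bullet> expectation X = expectation (\<lambda>x. v \<bullet> X x)"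
    using assms(1) by simp
  then show ?thesis
    using jensens_inequality[of "\<lambda>x. v \<bullet> X x" UNIV] assms convex_on_logistic_loss by simp
qed

lemma iterated_integral_add:
  fixes g :: "'a \<Rightarrow> real" and h :: "'b \<Rightarrow> real"
  assumes "prob_space N" "prob_space N'" "integrable N g" "integrable N' h"
  shows "(\<integral>y. \<integral>z. g y + h z \<partial>N' \<partial>N) = integral\<^sup>L N g + integral\<^sup>L N' h"
proof -
  have "(\<integral>z. g y + h z \<partial>N') = g y + integral\<^sup>L N' h" for y
    using assms(2,4)
    by (simp add: prob_space.prob_space finite_measure.integrable_const prob_space.finite_measure)
  then show ?thesis
    using assms(1,3)
    by (simp add: prob_space.prob_space finite_measure.integrable_const prob_space.finite_measure)
qed

locale bounded_features =
  fixes M :: "'x measure" and D :: "'c \<Rightarrow> 'x measure" and f :: "'x \<Rightarrow> real^'d" and B :: real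
  assumes prob_space_D: "\<And>c. prob_space (D c)"
    and sets_D: "\<And>c. sets (D c) = sets M"
    and f_measurable [measurable]: "f \<in> borel_measurable M"
    and norm_f_le: "\<And>x. x \<in> space M \<Longrightarrow> norm (f x) \<le> B"
begin

lemma space_D: "space (D c) = space M"
  using sets_D by (rule sets_eq_imp_space_eq)

lemma measurable_D_iff: "measurable (D c) N = measurable M N"
  by (rule measurable_cong_sets[OF sets_D refl])

lemma f_measurable_D [measurable]: "f \<in> borel_measurable (D c)"
  unfolding measurable_D_iff by (rule f_measurable)

lemma integrable_D:
  fixes g :: "'x \<Rightarrow> real"
  assumes "g \<in> borel_measurable M" and "\<And>x. x \<in> space M \<Longrightarrow> 0 \<le> g x \<and> g x \<le> C"
  shows "integrable (D c) g"
proof -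
  interpret prob_space "D c"
    by (rule prob_space_D)
  show ?thesis
    using assms unfolding measurable_D_iff[symmetric, where c=c] space_D[symmetric, where c=c]
    by (intro integrable_const_bound[where B=C] AE_I2) auto
qed

lemma integral_D_bounds:
  fixes g :: "'x \<Rightarrow> real"
  assumes "g \<in> borel_measurable M" and "\<And>x. x \<in> space M \<Longrightarrow> 0 \<le> g x \<and> g x \<le> C"
  shows "0 \<le> (\<integral>x. g x \<partial>D c) \<and> (\<integral>x. g x \<partial>D c) \<le> C"
proof -
  interpret prob_space "D c"
    by (rule prob_space_D)
  have "integrable (D c) g"
    using assms by (rule integrable_D)
  then show ?thesis
    using assms(2) unfolding space_D[symmetric, where c=c]
    by (auto intro!: integral_nonneg_AE integral_le_const AE_I2)
qed

lemma norm_class_mean_le: "norm (class_mean D f c) \<le> B"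
proof -
  have "norm (class_mean D f c) \<le> (\<integral>x. norm (f x) \<partial>D c)"
    unfolding class_mean_def by (rule integral_norm_bound)
  also have "\<dots> \<le> B"
    using integral_D_bounds[of "\<lambda>x. norm (f x)" B c] norm_f_le by auto
  finally show ?thesis .
qed

lemma abs_inner_le:
  assumes "x \<in> space M" and "norm v \<le> B"
  shows "\<bar>f x \<bullet> v\<bar> \<le> B\<^sup>2"
proof -
  have "\<bar>f x \<bullet> v\<bar> \<le> norm (f x) * norm v"
    by (rule Cauchy_Schwarz_ineq2)
  also have "\<dots> \<le> B * B"
    using norm_f_le[OF assms(1)] assms(2) order_trans[OF norm_ge_zero assms(2)]
    by (intro mult_mono) auto
  finally show ?thesis
    by (simp add: power2_eq_square)
qed

lemma logistic_loss_inner_bounds: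
  assumes "x \<in> space M" and "norm v \<le> B"
  shows "0 \<le> logistic_loss (f x \<bullet> v) \<and> logistic_loss (f x \<bullet> v) \<le> 1 + B\<^sup>2"
    and "0 \<le> logistic_loss (- (f x \<bullet> v)) \<and> logistic_loss (- (f x \<bullet> v)) \<le> 1 + B\<^sup>2"
  using abs_inner_le[OF assms] logistic_loss_le[of "f x \<bullet> v"] logistic_loss_le[of "- (f x \<bullet> v)"]
    logistic_loss_nonneg[of "f x \<bullet> v"] logistic_loss_nonneg[of "- (f x \<bullet> v)"] by simp_all

definition nce_positive_loss :: "'c \<Rightarrow> 'x \<Rightarrow> real" where
  "nce_positive_loss c x = (\<integral>xp. logistic_loss (f x \<bullet> f xp) \<partial>D c)"

definition nce_negative_loss :: "'c \<Rightarrow> 'x \<Rightarrow> real" where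
  "nce_negative_loss c x = (\<integral>xn. logistic_loss (- (f x \<bullet> f xn)) \<partial>D c)"

lemma nce_positive_loss_measurable [measurable]: "nce_positive_loss c \<in> borel_measurable M"
  unfolding nce_positive_loss_def[abs_def]
  by (rule sigma_finite_measure.borel_measurable_lebesgue_integral
      [OF prob_space_imp_sigma_finite[OF prob_space_D]]) measurable

lemma nce_negative_loss_measurable [measurable]: "nce_negative_loss c \<in> borel_measurable M"
  unfolding nce_negative_loss_def[abs_def]
  by (rule sigma_finite_measure.borel_measurable_lebesgue_integral
      [OF prob_space_imp_sigma_finite[OF prob_space_D]]) measurable

lemma integrable_f_D: "integrable (D c) f"
proof -
  interpret prob_space "D c"
    by (rule prob_space_D)
  show ?thesis
    using norm_f_le by (intro integrable_const_bound[where B=B] AE_I2) (auto simp: space_D)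
qed

lemma nce_positive_loss_bounds:
  "x \<in> space M \<Longrightarrow> 0 \<le> nce_positive_loss c x \<and> nce_positive_loss c x \<le> 1 + B\<^sup>2"
  unfolding nce_positive_loss_def
  using logistic_loss_inner_bounds(1) norm_f_le by (intro integral_D_bounds) auto

lemma nce_negative_loss_bounds:
  "x \<in> space M \<Longrightarrow> 0 \<le> nce_negative_loss c x \<and> nce_negative_loss c x \<le> 1 + B\<^sup>2"
  unfolding nce_negative_loss_def
  using logistic_loss_inner_bounds(2) norm_f_le by (intro integral_D_bounds) auto

lemma logistic_loss_le_nce_positive_loss:
  assumes "x \<in> space M"
  shows "logistic_loss (f x \<bullet> class_mean D f c) \<le> nce_positive_loss c x"
proof -
  have "integrable (D c) (\<lambda>xp. logistic_loss (f x \<bullet> f xp))"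
    using logistic_loss_inner_bounds(1)[OF assms] norm_f_le
    by (intro integrable_D[where C="1 + B\<^sup>2"]) auto
  then show ?thesis
    unfolding class_mean_def nce_positive_loss_def
    by (intro prob_space.logistic_loss_inner_expectation_le prob_space_D integrable_f_D)
qed

lemma logistic_loss_le_nce_negative_loss:
  assumes "x \<in> space M"
  shows "logistic_loss (- (f x \<bullet> class_mean D f c)) \<le> nce_negative_loss c x"
proof -
  have "integrable (D c) (\<lambda>xn. logistic_loss (- f x \<bullet> f xn))"
    using logistic_loss_inner_bounds(2)[OF assms] norm_f_le
    by (intro integrable_D[where C="1 + B\<^sup>2"]) auto
  then have "logistic_loss (- f x \<bullet> class_mean D f c) \<le> nce_negative_loss c x"
    unfolding class_mean_def nce_negative_loss_def
    by (simp only: inner_minus_left[symmetric])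
       (intro prob_space.logistic_loss_inner_expectation_le prob_space_D integrable_f_D)
  then show ?thesis
    by simp
qed

lemma sup_integrand_bounds:
  assumes "x \<in> space M"
  shows "0 \<le> logistic_loss (f x \<bullet> class_mean D f c) + logistic_loss (- (f x \<bullet> class_mean D f c'))
         \<and> logistic_loss (f x \<bullet> class_mean D f c) + logistic_loss (- (f x \<bullet> class_mean D f c'))
             \<le> 2 * (1 + B\<^sup>2)"
  using logistic_loss_inner_bounds(1)[OF assms norm_class_mean_le, of c]
    logistic_loss_inner_bounds(2)[OF assms norm_class_mean_le, of c'] by auto

lemma nce_integrand_bounds:
  assumes "x \<in> space M"
  shows "0 \<le> nce_positive_loss c x + nce_negative_loss c' x
         \<and> nce_positive_loss c x + nce_negative_loss c' x \<le> 2 * (1 + B\<^sup>2)"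
  using nce_positive_loss_bounds[OF assms, of c] nce_negative_loss_bounds[OF assms, of c'] by auto

definition sup_pair_loss :: "'c \<Rightarrow> 'c \<Rightarrow> real" where
  "sup_pair_loss c c' = (\<integral>x. logistic_loss (f x \<bullet> class_mean D f c)
                             + logistic_loss (- (f x \<bullet> class_mean D f c')) \<partial>D c)"

definition nce_pair_loss :: "'c \<Rightarrow> 'c \<Rightarrow> real" where
  "nce_pair_loss c c' = (\<integral>x. nce_positive_loss c x + nce_negative_loss c' x \<partial>D c)"

lemma sup_pair_loss_bounds: "0 \<le> sup_pair_loss c c' \<and> sup_pair_loss c c' \<le> 2 * (1 + B\<^sup>2)"
  unfolding sup_pair_loss_def
  by (intro integral_D_bounds) (measurable, erule sup_integrand_bounds)

lemma nce_pair_loss_bounds: "0 \<le> nce_pair_loss c c' \<and> nce_pair_loss c c' \<le> 2 * (1 + B\<^sup>2)"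
  unfolding nce_pair_loss_def
  by (intro integral_D_bounds) (measurable, erule nce_integrand_bounds)

lemma sup_pair_loss_diag_ge_one: "1 \<le> sup_pair_loss c c"
proof -
  interpret prob_space "D c"
    by (rule prob_space_D)
  have "integrable (D c) (\<lambda>x. logistic_loss (f x \<bullet> class_mean D f c)
                              + logistic_loss (- (f x \<bullet> class_mean D f c)))"
    by (intro integrable_D) (measurable, erule sup_integrand_bounds)
  then show ?thesis
    unfolding sup_pair_loss_def
    using logistic_loss_add_reflect_ge_one by (intro integral_ge_const AE_I2)
qed

lemma sup_pair_loss_le_nce_pair_loss: "sup_pair_loss c c' \<le> nce_pair_loss c c'"
  unfolding sup_pair_loss_def nce_pair_loss_def
proof (intro integral_mono)
  show "integrable (D c) (\<lambda>x. logistic_loss (f x \<bullet> class_mean D f c)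
                              + logistic_loss (- (f x \<bullet> class_mean D f c')))"
    by (intro integrable_D) (measurable, erule sup_integrand_bounds)
  show "integrable (D c) (\<lambda>x. nce_positive_loss c x + nce_negative_loss c' x)"
    by (intro integrable_D) (measurable, erule nce_integrand_bounds)
  show "logistic_loss (f x \<bullet> class_mean D f c) + logistic_loss (- (f x \<bullet> class_mean D f c'))
          \<le> nce_positive_loss c x + nce_negative_loss c' x" if "x \<in> space (D c)" for x
    using that logistic_loss_le_nce_positive_loss logistic_loss_le_nce_negative_loss
    by (simp add: space_D add_mono)
qed

lemma L_nce_eq: "L_nce \<rho> D f = (\<integral>c. \<integral>c'. nce_pair_loss c c' \<partial>\<rho> \<partial>\<rho>)"
proof -
  have split: "(\<integral>xp. \<integral>xn. logistic_loss (f x \<bullet> f xp) + logistic_loss (- (f x \<bullet> f xn))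
                   \<partial>D c' \<partial>D c) = nce_positive_loss c x + nce_negative_loss c' x"
    if "x \<in> space M" for x c c'
    unfolding nce_positive_loss_def nce_negative_loss_def
    using logistic_loss_inner_bounds[OF that norm_f_le]
    by (intro iterated_integral_add prob_space_D integrable_D[where C="1 + B\<^sup>2"]) auto
  have "L_nce \<rho> D f = (\<integral>c. \<integral>c'. \<integral>x. \<integral>xp. \<integral>xn.
            logistic_loss (f x \<bullet> f xp) + logistic_loss (- (f x \<bullet> f xn)) \<partial>D c' \<partial>D c \<partial>D c \<partial>\<rho> \<partial>\<rho>)"
    unfolding L_nce_def ln_sigmoid
    by (simp only: minus_add_distrib[symmetric] integral_minus minus_minus)
  also have "\<dots> = (\<integral>c. \<integral>c'. nce_pair_loss c c' \<partial>\<rho> \<partial>\<rho>)"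
    unfolding nce_pair_loss_def using split
    by (intro Bochner_Integration.integral_cong refl) (simp add: space_D)
  finally show ?thesis .
qed

lemma L_sup_mu_eq:
  "L_sup_mu \<rho> D f = (\<integral>cc. sup_pair_loss (fst cc) (snd cc)
                          \<partial>cond_pmf (pair_pmf \<rho> \<rho>) {(c, c'). c \<noteq> c'})"
  unfolding L_sup_mu_def sup_pair_loss_def ln_sigmoid by simp

lemma L_sup_mu_bound:
  assumes "coll_prob \<rho> < 1"
  shows "(1 - coll_prob \<rho>) * L_sup_mu \<rho> D f + coll_prob \<rho> \<le> L_nce \<rho> D f"
proof -
  have "(1 - coll_prob \<rho>) * L_sup_mu \<rho> D f + coll_prob \<rho>
          \<le> (\<integral>c. \<integral>c'. sup_pair_loss c c' \<partial>\<rho> \<partial>\<rho>)"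
    unfolding L_sup_mu_eq
    by (rule cond_off_diagonal_expectation_bound[OF assms sup_pair_loss_bounds sup_pair_loss_diag_ge_one])
  also have "\<dots> \<le> (\<integral>c. \<integral>c'. nce_pair_loss c c' \<partial>\<rho> \<partial>\<rho>)"
    using sup_pair_loss_bounds nce_pair_loss_bounds sup_pair_loss_le_nce_pair_loss
    by (intro integral_mono integrable_measure_pmf_bounded integral_measure_pmf_bounds) auto
  also have "\<dots> = L_nce \<rho> D f"
    by (rule L_nce_eq[symmetric])
  finally show ?thesis .
qed

end

theorem lemma1:
  fixes \<rho> :: "'c pmf" and M :: "'x measure" and D :: "'c \<Rightarrow> 'x measure"
    and f :: "'x \<Rightarrow> real^'d"
  assumes D_prob: "\<And>c. prob_space (D c)"
    and D_sets: "\<And>c. sets (D c) = sets M"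
    and tau_lt: "coll_prob \<rho> < 1"
    and f_meas: "f \<in> borel_measurable M"
    and f_bdd: "\<exists>B. \<forall>x\<in>space M. norm (f x) \<le> B"
  shows "L_sup_mu \<rho> D f \<le> (1 / (1 - coll_prob \<rho>)) * (L_nce \<rho> D f - coll_prob \<rho>)"
proof -
  obtain B where "\<forall>x\<in>space M. norm (f x) \<le> B"
    using f_bdd by blast
  then interpret bounded_features M D f B
    using D_prob D_sets f_meas by (intro bounded_features.intro) auto
  have "(1 - coll_prob \<rho>) * L_sup_mu \<rho> D f \<le> L_nce \<rho> D f - coll_prob \<rho>"
    using L_sup_mu_bound[OF tau_lt] by simp
  then show ?thesis
    using tau_lt by (simp add: pos_le_divide_eq mult.commute)
qed

end
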